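(* Let $f(t_1,t_2)=[t_1,t_2,t_{i_3},\ldots,t_{i_k}]$ be a left normed commutator with $i_j\in\{1,2\}$ (and $i_1=1$, $i_2=2$), with $\deg_{t_1}f=n$, $\deg_{t_2}f=m$, $n+m=k\ge 2$. Put $i=i_k$. Then $f(C_1,C_2)=(x_1'-x_1)^{n-1}(x_2'-x_2)^{m-1}A(k)$, where \[A(k)=\begin{pmatrix} F(k) & y_1(x_2'-x_2)-y_2(x_1'-x_1)\\ (-1)^k\big(y_2'(x_1'-x_1)-y_1'(x_2'-x_2)\big) & F(k)\end{pmatrix},\] \[F(k)=\frac{\big(y_1(x_2'-x_2)-y_2(x_1'-x_1)\big)y_i'+(-1)^k y_i\big(y_2'(x_1'-x_1)-y_1'(x_2'-x_2)\big)}{x_i'-x_i}.\]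
   Context: $K$ is an infinite field of characteristic different from 2. Let $X=\{x_1,x_2,x_1',x_2'\}$ and $Y=\{y_1,y_2,y_1',y_2'\}$, and let $K[X;Y]\cong K[X]\otimes_K E(Y)$ be the free supercommutative algebra: the $x$'s are even commuting variables, the $y$'s are odd pairwise anticommuting variables, and $E(Y)$ is the Grassmann algebra on the vector space with basis $Y$. The division defining $F(k)$ is performed in $K(X)\otimes_K E(Y)$, where $K(X)$ is the field of fractions of $K[X]$. Put $C_1=\begin{pmatrix} x_1&y_1\\ y_1'&x_1'\end{pmatrix}$, $C_2=\begin{pmatrix} x_2&y_2\\ y_2'&x_2'\end{pmatrix}\in M_2(K[X;Y])$. Commutators are $[a,b]=ab-ba$ and are left normed: $[a_1,\ldots,a_k]=[[a_1,\ldots,a_{k-1}],a_k]$. $t_1,t_2$ are free noncommuting variables and $f(C_1,C_2)$ denotes evaluation. *)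

theory Defs
  imports "HOL-Computational_Algebra.Polynomial" "HOL-Computational_Algebra.Fraction_Field"
begin

text \<open>K[X] with X = {x1,x2,x1',x2'} is modelled as the iterated polynomial ring
  'k poly poly poly poly, and K(X) as its fraction field.  Variable indices:
  0 = x1, 1 = x2, 2 = x1', 3 = x2'.\<close>

type_synonym 'k ratfun = "'k poly poly poly poly fract"

definition xvar :: "nat \<Rightarrow> 'k::field ratfun" where
  "xvar j = Fract (if j = 0 then [:0, 1:]
                   else if j = 1 then [:[:0, 1:]:]
                   else if j = 2 then [:[:[:0, 1:]:]:]
                   else [:[:[:[:0, 1:]:]:]:]) 1"

text \<open>Grassmann algebra with coefficients in a commutative ring 'r: an element is
  the family of its coefficients w.r.t. the monomials e_S (S a finite set of
  generator indices, listed increasingly).  Odd generators: 0 = y1, 1 = y2,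
  2 = y1', 3 = y2'.\<close>

type_synonym 'r grass = "nat set \<Rightarrow> 'r"

definition gsgn :: "nat set \<Rightarrow> nat set \<Rightarrow> 'r::comm_ring_1" where
  "gsgn T U = (-1) ^ card {(t, u). t \<in> T \<and> u \<in> U \<and> u < t}"

definition gmul :: "'r::comm_ring_1 grass \<Rightarrow> 'r grass \<Rightarrow> 'r grass" where
  "gmul a b = (\<lambda>S. \<Sum>T\<in>Pow S. gsgn T (S - T) * a T * b (S - T))"

definition gadd :: "'r::comm_ring_1 grass \<Rightarrow> 'r grass \<Rightarrow> 'r grass" where
  "gadd a b = (\<lambda>S. a S + b S)"

definition gsub :: "'r::comm_ring_1 grass \<Rightarrow> 'r grass \<Rightarrow> 'r grass" where
  "gsub a b = (\<lambda>S. a S - b S)"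

definition gscale :: "'r::comm_ring_1 \<Rightarrow> 'r grass \<Rightarrow> 'r grass" where
  "gscale c a = (\<lambda>S. c * a S)"

definition gconst :: "'r::comm_ring_1 \<Rightarrow> 'r grass" where
  "gconst c = (\<lambda>S. if S = {} then c else 0)"

definition ygen :: "nat \<Rightarrow> 'r::comm_ring_1 grass" where
  "ygen j = (\<lambda>S. if S = {j} then 1 else 0)"

text \<open>2x2 matrices over the Grassmann algebra, indexed by bool (False = first row/col).\<close>

type_synonym 'r gmat = "bool \<Rightarrow> bool \<Rightarrow> 'r grass"

definition mk2 :: "'r grass \<Rightarrow> 'r grass \<Rightarrow> 'r grass \<Rightarrow> 'r grass \<Rightarrow> 'r gmat" where
  "mk2 a b c d = (\<lambda>i j. if \<not> i then (if \<not> j then a else b) else (if \<not> j then c else d))"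

definition mmul :: "'r::comm_ring_1 gmat \<Rightarrow> 'r gmat \<Rightarrow> 'r gmat" where
  "mmul A B = (\<lambda>i j. gadd (gmul (A i False) (B False j)) (gmul (A i True) (B True j)))"

definition msub :: "'r::comm_ring_1 gmat \<Rightarrow> 'r gmat \<Rightarrow> 'r gmat" where
  "msub A B = (\<lambda>i j. gsub (A i j) (B i j))"

definition mscale :: "'r::comm_ring_1 \<Rightarrow> 'r gmat \<Rightarrow> 'r gmat" where
  "mscale c A = (\<lambda>i j. gscale c (A i j))"

definition mcomm :: "'r::comm_ring_1 gmat \<Rightarrow> 'r gmat \<Rightarrow> 'r gmat" where
  "mcomm A B = msub (mmul A B) (mmul B A)"

definition lcomm :: "(nat \<Rightarrow> 'r::comm_ring_1 gmat) \<Rightarrow> nat list \<Rightarrow> 'r gmat" where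
  "lcomm M ws = foldl (\<lambda>acc w. mcomm acc (M w)) (M (hd ws)) (tl ws)"

definition Cmat :: "nat \<Rightarrow> ('k::field ratfun) gmat" where
  "Cmat j = (if j = 1
     then mk2 (gconst (xvar 0)) (ygen 0) (ygen 2) (gconst (xvar 2))
     else mk2 (gconst (xvar 1)) (ygen 1) (ygen 3) (gconst (xvar 3)))"

end

theory Submission
  imports Defs
begin

text \<open>Write \<open>C\<^sub>j\<close> with entries \<open>x\<^sub>j, y\<^sub>j, y\<^sub>j', x\<^sub>j'\<close>. The element \<open>F\<close> is even and \<open>B, D\<close>
  are odd in the Grassmann algebra, so \<open>F\<close> commutes with every \<open>y\<close> while \<open>B, D\<close> anticommute
  with them. A direct computation then shows that, for the matrix \<open>A(s, i)\<close> built from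
  \<open>F, B, D\<close> with sign \<open>s\<close> and last index \<open>i\<close>, the commutator \<open>[A(s, i), C\<^sub>j]\<close> equals
  \<open>(x\<^sub>j' - x\<^sub>j) A(-s, j)\<close>. Since \<open>[C\<^sub>1, C\<^sub>2] = A(1, 2)\<close>, induction on the length of the word
  gives the formula, each further letter \<open>j\<close> contributing one factor \<open>x\<^sub>j' - x\<^sub>j\<close> and one
  sign change.\<close>

text \<open>The coefficients of \<open>gmul a b\<close> at infinite index sets are \<open>0\<close> by definition, so
  identities such as \<open>a \<cdot> 1 = a\<close> hold only for elements that already vanish there.\<close>

definition gfinite :: "'r::comm_ring_1 grass \<Rightarrow> bool" where
  "gfinite a \<longleftrightarrow> (\<forall>S. infinite S \<longrightarrow> a S = 0)"

lemma gmul_infinite: "infinite S \<Longrightarrow> gmul a b S = 0"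
  by (simp add: gmul_def)

lemma gfinite_gmul [simp]: "gfinite (gmul a b)"
  by (simp add: gfinite_def gmul_infinite)

lemma gfinite_ygen [simp]: "gfinite (ygen j)"
  by (auto simp: gfinite_def ygen_def)

lemma gfinite_gadd [simp]: "gfinite a \<Longrightarrow> gfinite b \<Longrightarrow> gfinite (gadd a b)"
  by (simp add: gfinite_def gadd_def)

lemma gfinite_gsub [simp]: "gfinite a \<Longrightarrow> gfinite b \<Longrightarrow> gfinite (gsub a b)"
  by (simp add: gfinite_def gsub_def)

lemma gfinite_gscale [simp]: "gfinite a \<Longrightarrow> gfinite (gscale c a)"
  by (simp add: gfinite_def gscale_def)

lemma gmul_gadd_left [simp]: "gmul (gadd a b) c = gadd (gmul a c) (gmul b c)"
  by (rule ext) (simp add: gmul_def gadd_def algebra_simps sum.distrib)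

lemma gmul_gadd_right [simp]: "gmul c (gadd a b) = gadd (gmul c a) (gmul c b)"
  by (rule ext) (simp add: gmul_def gadd_def algebra_simps sum.distrib)

lemma gmul_gsub_left [simp]: "gmul (gsub a b) c = gsub (gmul a c) (gmul b c)"
  by (rule ext) (simp add: gmul_def gsub_def algebra_simps sum_subtractf)

lemma gmul_gsub_right [simp]: "gmul c (gsub a b) = gsub (gmul c a) (gmul c b)"
  by (rule ext) (simp add: gmul_def gsub_def algebra_simps sum_subtractf)

lemma gmul_gscale_left [simp]: "gmul (gscale x a) c = gscale x (gmul a c)"
  by (rule ext) (simp add: gmul_def gscale_def algebra_simps sum_distrib_left)

lemma gmul_gscale_right [simp]: "gmul c (gscale x a) = gscale x (gmul c a)"
  by (rule ext) (simp add: gmul_def gscale_def algebra_simps sum_distrib_left)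

lemma gmul_gconst_right [simp]:
  assumes "gfinite a"
  shows "gmul a (gconst x) = gscale x a"
proof (rule ext)
  fix S :: "nat set"
  show "gmul a (gconst x) S = gscale x a S"
  proof (cases "finite S")
    case True
    have "gmul a (gconst x) S = (\<Sum>T\<in>Pow S. if T = S then gsgn S {} * a S * x else 0)"
      unfolding gmul_def gconst_def by (rule sum.cong) auto
    with True show ?thesis
      by (simp add: gsgn_def gscale_def)
  next
    case False
    with assms show ?thesis
      by (simp add: gmul_infinite gfinite_def gscale_def)
  qed
qed

lemma gmul_gconst_left [simp]:
  assumes "gfinite a"
  shows "gmul (gconst x) a = gscale x a"
proof (rule ext)
  fix S :: "nat set"
  show "gmul (gconst x) a S = gscale x a S"
  proof (cases "finite S")
    case True
    have "gmul (gconst x) a S = (\<Sum>T\<in>Pow S. if T = {} then gsgn {} S * x * a S else 0)"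
      unfolding gmul_def gconst_def by (rule sum.cong) auto
    with True show ?thesis
      by (simp add: gsgn_def gscale_def)
  next
    case False
    with assms show ?thesis
      by (simp add: gmul_infinite gfinite_def gscale_def)
  qed
qed

lemma gfinite_gconst [simp]: "gfinite (gconst x)"
  by (simp add: gfinite_def gconst_def)

lemma gscale_gconst_swap: "gscale x (gconst y) = gscale y (gconst (x::'r::comm_ring_1))"
  by (rule ext) (simp add: gscale_def gconst_def)

lemma card_filter_singleton: "card {t\<in>{a}. P t} = (if P a then 1 else 0)"
  by (cases "P a") (simp_all add: Collect_conv_if)

lemma card_filter_doubleton:
  assumes "a \<noteq> b"
  shows "card {t\<in>{a, b}. P t} = (if P a then 1 else 0) + (if P b then 1 else 0)"
proof -
  have "{t\<in>{a, b}. P t} = (if P a then {a} else {}) \<union> (if P b then {b} else {})" by auto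
  with assms show ?thesis by simp
qed

lemma gsgn_singleton_right: "gsgn T {c} = (-1) ^ card {t\<in>T. c < t}"
proof -
  have "{(t, u). t \<in> T \<and> u \<in> {c} \<and> u < t} = (\<lambda>t. (t, c)) ` {t\<in>T. c < t}" by auto
  moreover have "inj_on (\<lambda>t. (t, c)) {t\<in>T. c < t}" by (auto simp: inj_on_def)
  ultimately show ?thesis by (simp add: gsgn_def card_image)
qed

lemma gsgn_singleton_left: "gsgn {c} U = (-1) ^ card {u\<in>U. u < c}"
proof -
  have "{(t, u). t \<in> {c} \<and> u \<in> U \<and> u < t} = Pair c ` {u\<in>U. u < c}" by auto
  moreover have "inj_on (Pair c) {u\<in>U. u < c}" by (auto simp: inj_on_def)
  ultimately show ?thesis by (simp add: gsgn_def card_image)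
qed

lemma gsgn_doubleton_singleton_swap:
  assumes "a \<noteq> b" "c \<noteq> a" "c \<noteq> b"
  shows "gsgn {a, b} {c} = (gsgn {c} {a, b} :: 'r::comm_ring_1)"
proof -
  have "{u\<in>{a, b}. u < c} = {u\<in>{a, b}. \<not> c < u}" using assms by auto
  then show ?thesis
    unfolding gsgn_singleton_right gsgn_singleton_left card_filter_doubleton[OF assms(1)]
    using assms by (cases "c < a"; cases "c < b") (simp_all add: card_filter_doubleton)
qed

lemma gmul_ygen_ygen:
  "gmul (ygen a) (ygen b) =
     (\<lambda>S. if a \<noteq> b \<and> S = {a, b} then (if b < a then -1 else 1) else (0::'r::comm_ring_1))"
proof (rule ext)
  fix S :: "nat set"
  show "gmul (ygen a) (ygen b) S =
      (if a \<noteq> b \<and> S = {a, b} then (if b < a then -1 else 1) else (0::'r))"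
  proof (cases "finite S")
    case True
    have "gmul (ygen a) (ygen b) S =
        (\<Sum>T\<in>Pow S. if T = {a} then (if S - {a} = {b} then gsgn {a} {b} else 0) else (0::'r))"
      unfolding gmul_def ygen_def by (rule sum.cong) auto
    also have "\<dots> = (if a \<in> S \<and> S - {a} = {b} then gsgn {a} {b} else 0)"
      using True by simp
    also have "\<dots> = (if a \<noteq> b \<and> S = {a, b} then (if b < a then -1 else 1) else (0::'r))"
    proof -
      have "a \<in> S \<and> S - {a} = {b} \<longleftrightarrow> a \<noteq> b \<and> S = {a, b}" by blast
      moreover have "gsgn {a} {b} = (if b < a then -1 else (1::'r))"
        unfolding gsgn_singleton_right card_filter_singleton by simp
      ultimately show ?thesis by simp
    qed
    finally show ?thesis .
  next
    case False
    then show ?thesis by (auto simp: gmul_infinite)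
  qed
qed

lemma gmul_ygen_anticomm: "gmul (ygen a) (ygen b) S = - (gmul (ygen b) (ygen a) S :: 'r::comm_ring_1)"
  by (auto simp: gmul_ygen_ygen insert_commute)

text \<open>Oriented as a rewrite rule, this sorts products of two generators increasingly.\<close>

lemma gmul_ygen_ygen_swap [simp]:
  "b < a \<Longrightarrow> gmul (ygen a) (ygen b) = gscale (-1) (gmul (ygen b) (ygen a) :: 'r::comm_ring_1 grass)"
  by (rule ext) (simp add: gscale_def gmul_ygen_anticomm[of a b])

lemma gmul_ygen_right_apply:
  "gmul a (ygen c) S = (if finite S \<and> c \<in> S then gsgn (S - {c}) {c} * a (S - {c}) else 0)"
proof (cases "finite S")
  case True
  have eq: "T \<subseteq> S \<Longrightarrow> S - T = {c} \<longleftrightarrow> T = S - {c} \<and> c \<in> S" for T by auto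
  have diff: "c \<in> S \<Longrightarrow> S - (S - {c}) = {c}" by auto
  have "gmul a (ygen c) S =
      (\<Sum>T\<in>Pow S. if T = S - {c} then (if c \<in> S then gsgn (S - {c}) {c} * a (S - {c}) else 0) else 0)"
    unfolding gmul_def ygen_def by (rule sum.cong) (auto simp: eq diff)
  with True show ?thesis by simp
qed (simp add: gmul_infinite)

lemma gmul_ygen_left_apply:
  "gmul (ygen c) a S = (if finite S \<and> c \<in> S then gsgn {c} (S - {c}) * a (S - {c}) else 0)"
proof (cases "finite S")
  case True
  have "gmul (ygen c) a S =
      (\<Sum>T\<in>Pow S. if T = {c} then (if c \<in> S then gsgn {c} (S - {c}) * a (S - {c}) else 0) else 0)"
    unfolding gmul_def ygen_def by (rule sum.cong) auto
  with True show ?thesis by simp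
qed (simp add: gmul_infinite)

lemma ygen_gmul_ygen_ygen_comm [simp]:
  "gmul (ygen c) (gmul (ygen a) (ygen b)) = (gmul (gmul (ygen a) (ygen b)) (ygen c) :: 'r::comm_ring_1 grass)"
proof (rule ext)
  fix S :: "nat set"
  show "gmul (ygen c) (gmul (ygen a) (ygen b)) S = (gmul (gmul (ygen a) (ygen b)) (ygen c) S :: 'r)"
  proof (cases "finite S \<and> c \<in> S \<and> a \<noteq> b \<and> S - {c} = {a, b}")
    case True
    then have "gsgn {a, b} {c} = (gsgn {c} {a, b} :: 'r)"
      by (intro gsgn_doubleton_singleton_swap) auto
    with True show ?thesis by (simp add: gmul_ygen_left_apply gmul_ygen_right_apply gmul_ygen_ygen)
  next
    case False
    then show ?thesis by (auto simp: gmul_ygen_left_apply gmul_ygen_right_apply gmul_ygen_ygen)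
  qed
qed

lemma xvar_sub_nonzero:
  "xvar 2 - xvar 0 \<noteq> (0::'k::field ratfun)" "xvar 3 - xvar 1 \<noteq> (0::'k::field ratfun)"
  by (simp_all add: xvar_def eq_fract Zero_fract_def)

definition cx :: "nat \<Rightarrow> 'k::field ratfun" where
  "cx j = (if j = 1 then xvar 0 else xvar 1)"

definition cx' :: "nat \<Rightarrow> 'k::field ratfun" where
  "cx' j = (if j = 1 then xvar 2 else xvar 3)"

definition cy :: "nat \<Rightarrow> 'k::field ratfun grass" where
  "cy j = (if j = 1 then ygen 0 else ygen 1)"

definition cy' :: "nat \<Rightarrow> 'k::field ratfun grass" where
  "cy' j = (if j = 1 then ygen 2 else ygen 3)"

definition B_entry :: "'k::field ratfun grass" where
  "B_entry = gsub (gmul (ygen 0) (gconst (xvar 3 - xvar 1))) (gmul (ygen 1) (gconst (xvar 2 - xvar 0)))"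

definition D_entry :: "'k::field ratfun grass" where
  "D_entry = gsub (gmul (ygen 3) (gconst (xvar 2 - xvar 0))) (gmul (ygen 2) (gconst (xvar 3 - xvar 1)))"

definition F_entry :: "'k::field ratfun \<Rightarrow> nat \<Rightarrow> 'k ratfun grass" where
  "F_entry s i = gscale (inverse (cx' i - cx i)) (gadd (gmul B_entry (cy' i)) (gscale s (gmul (cy i) D_entry)))"

definition A_mat :: "'k::field ratfun \<Rightarrow> nat \<Rightarrow> 'k ratfun gmat" where
  "A_mat s i = mk2 (F_entry s i) B_entry (gscale s D_entry) (F_entry s i)"

lemma Cmat_eq_mk2: "j = 1 \<or> j = 2 \<Longrightarrow> Cmat j = mk2 (gconst (cx j)) (cy j) (cy' j) (gconst (cx' j))"
  by (auto simp: Cmat_def cx_def cx'_def cy_def cy'_def)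

lemma cx'_sub_cx_nonzero: "j = 1 \<or> j = 2 \<Longrightarrow> cx' j - cx j \<noteq> 0"
  using xvar_sub_nonzero by (auto simp: cx_def cx'_def)

lemma gfinite_entries [simp]:
  "gfinite B_entry" "gfinite D_entry" "gfinite (F_entry s i)" "gfinite (cy j)" "gfinite (cy' j)"
  by (simp_all add: B_entry_def D_entry_def F_entry_def cy_def cy'_def)

lemma F_entry_ygen_comm: "gmul (F_entry s i) (ygen c) = gmul (ygen c) (F_entry s i)"
  unfolding F_entry_def B_entry_def D_entry_def cy_def cy'_def by simp

lemma D_entry_ygen_anticomm: "gmul D_entry (ygen c) = gscale (-1) (gmul (ygen c) D_entry)"
  unfolding D_entry_def
  by (simp, rule ext) (simp add: gsub_def gscale_def gmul_ygen_anticomm[of _ c] algebra_simps)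

lemma ygen_B_entry_anticomm: "gmul (ygen c) B_entry = gscale (-1) (gmul B_entry (ygen c))"
  unfolding B_entry_def
  by (simp, rule ext) (simp add: gsub_def gscale_def gmul_ygen_anticomm[of c] algebra_simps)

lemma entries_parity [simp]:
  "gmul (F_entry s i) (cy j) = gmul (cy j) (F_entry s i)"
  "gmul (F_entry s i) (cy' j) = gmul (cy' j) (F_entry s i)"
  "gmul D_entry (cy j) = gscale (-1) (gmul (cy j) D_entry)"
  "gmul (cy' j) B_entry = gscale (-1) (gmul B_entry (cy' j))"
  by (simp_all add: cy_def cy'_def F_entry_ygen_comm D_entry_ygen_anticomm ygen_B_entry_anticomm)

lemma mult_mult_inverse_cancel: "(d::'a::field) \<noteq> 0 \<Longrightarrow> c * d * (inverse d * z) = c * z"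
  by (simp add: mult.assoc[symmetric])

text \<open>After the parity rules, each entry reduces to an identity of scalar coefficients, where
  the only relation needed is \<open>(x\<^sub>j' - x\<^sub>j) / (x\<^sub>j' - x\<^sub>j) = 1\<close>.\<close>

lemma mcomm_mscale_A_mat_Cmat:
  fixes c :: "'k::field ratfun"
  assumes j: "j = 1 \<or> j = 2" and "i = 1 \<or> i = 2"
  shows "mcomm (mscale c (A_mat s i)) (Cmat j) = mscale (c * (cx' j - cx j)) (A_mat (-s) j)"
proof (intro ext)
  fix p q S
  show "mcomm (mscale c (A_mat s i)) (Cmat j) p q S = mscale (c * (cx' j - cx j)) (A_mat (-s) j) p q S"
    by (cases p; cases q;
        simp add: mcomm_def msub_def mmul_def mscale_def mk2_def A_mat_def Cmat_eq_mk2[OF j])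
       (simp_all add: gadd_def gsub_def gscale_def F_entry_def
         mult_mult_inverse_cancel[OF cx'_sub_cx_nonzero[OF j]], simp_all add: algebra_simps)
qed

lemma mcomm_Cmat_1_2: "mcomm (Cmat 1) (Cmat 2) = (A_mat 1 2 :: 'k::field ratfun gmat)"
proof (intro ext)
  fix p q S
  have "xvar 3 \<noteq> (xvar (Suc 0) :: 'k ratfun)"
    using xvar_sub_nonzero(2) by simp
  then show "mcomm (Cmat 1) (Cmat 2) p q S = (A_mat 1 2 :: 'k ratfun gmat) p q S"
    by (cases p; cases q; simp add: mcomm_def msub_def mmul_def mk2_def A_mat_def F_entry_def
         B_entry_def D_entry_def cx_def cx'_def cy_def cy'_def Cmat_def)
       (simp_all add: gscale_gconst_swap, simp_all add: gadd_def gsub_def gscale_def field_simps)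
qed

lemma lcomm_snoc: "ws \<noteq> [] \<Longrightarrow> lcomm M (ws @ [w]) = mcomm (lcomm M ws) (M w)"
  by (cases ws) (simp_all add: lcomm_def)

lemma lcomm_Cmat:
  assumes "set rest \<subseteq> {1, 2}"
  shows "lcomm Cmat (1 # 2 # rest) =
    mscale ((xvar 2 - xvar 0) ^ length (filter (\<lambda>w. w = 1) rest) *
            (xvar 3 - xvar 1) ^ length (filter (\<lambda>w. w = 2) rest))
           (A_mat ((-1) ^ length rest) (last (2 # rest)) :: 'k::field ratfun gmat)"
  using assms
proof (induction rest rule: rev_induct)
  case Nil
  then show ?case
    by (simp add: lcomm_def mcomm_Cmat_1_2[unfolded One_nat_def] mscale_def gscale_def)
next
  case (snoc j rest)
  have j: "j = 1 \<or> j = 2" using snoc.prems by auto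
  have i: "last (2 # rest) = 1 \<or> last (2 # rest) = 2"
  proof (cases "rest = []")
    case False
    then have "last rest \<in> set rest" by simp
    with snoc.prems have "last rest \<in> {1, 2}" by auto
    with False show ?thesis by simp
  qed simp
  let ?c = "(xvar 2 - xvar 0) ^ length (filter (\<lambda>w. w = 1) rest) *
    (xvar 3 - xvar 1) ^ length (filter (\<lambda>w. w = 2) rest) :: 'k ratfun"
  have IH: "lcomm Cmat (1 # 2 # rest) = mscale ?c (A_mat ((-1) ^ length rest) (last (2 # rest)))"
    using snoc by simp
  have "lcomm Cmat (1 # 2 # rest @ [j]) = mcomm (lcomm Cmat (1 # 2 # rest)) (Cmat j)"
    using lcomm_snoc[of "1 # 2 # rest"] by simp
  also have "\<dots> = mscale (?c * (cx' j - cx j)) (A_mat (- ((-1) ^ length rest)) j)"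
    unfolding IH by (rule mcomm_mscale_A_mat_Cmat[OF j i])
  finally show ?case
    using j by (auto simp: cx_def cx'_def mult_ac)
qed

theorem lemma6:
  fixes ws :: "nat list" and n m k i :: nat
  assumes Kinf: "infinite (UNIV :: 'k::field set)"
    and char2: "(2::'k) \<noteq> 0"
    and len: "length ws = k" and k2: "k \<ge> 2"
    and w1: "ws ! 0 = 1" and w2: "ws ! 1 = 2"
    and wset: "set ws \<subseteq> {1, 2}"
    and ndef: "n = length (filter (\<lambda>w. w = 1) ws)"
    and mdef: "m = length (filter (\<lambda>w. w = 2) ws)"
    and idef: "i = last ws"
  shows
    "let x1 = (xvar 0 :: 'k ratfun); x2 = xvar 1; x1' = xvar 2; x2' = xvar 3;
         y1 = (ygen 0 :: 'k ratfun grass); y2 = ygen 1; y1' = ygen 2; y2' = ygen 3;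
         xi = (if i = 1 then x1 else x2); xi' = (if i = 1 then x1' else x2');
         yi = (if i = 1 then y1 else y2); yi' = (if i = 1 then y1' else y2');
         s = (-1) ^ k;
         B = gsub (gmul y1 (gconst (x2' - x2))) (gmul y2 (gconst (x1' - x1)));
         D = gsub (gmul y2' (gconst (x1' - x1))) (gmul y1' (gconst (x2' - x2)));
         F = gscale (inverse (xi' - xi)) (gadd (gmul B yi') (gscale s (gmul yi D)));
         A = mk2 F B (gscale s D) F
     in lcomm Cmat ws = mscale ((x1' - x1) ^ (n - 1) * (x2' - x2) ^ (m - 1)) A"
proof -
  obtain rest where ws: "ws = 1 # 2 # rest"
    using len k2 w1 w2 by (cases ws; cases "tl ws") auto
  have "lcomm Cmat ws =
      mscale ((xvar 2 - xvar 0) ^ (n - 1) * (xvar 3 - xvar 1) ^ (m - 1)) (A_mat ((-1) ^ k) i)"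
    using lcomm_Cmat[of rest] wset unfolding ws ndef mdef idef len[symmetric] by simp
  then show ?thesis
    unfolding Let_def A_mat_def F_entry_def B_entry_def D_entry_def cx_def cx'_def cy_def cy'_def
    by simp
qed

end
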